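(* Let $x=(x_1,\dots,x_n)$ be a sequence of nonzero integers with pairwise distinct absolute values such that $1\in\{x_1,\dots,x_n\}$, and let $tx$ be the sequence obtained from $x$ by replacing the entry $1$ by $-1$. For a sequence $y$ let $a_k(y)=p({}^-y)_1+\dots+p({}^-y)_k$ and $b_k(y)=q({}^-y)_1+\dots+q({}^-y)_k$. Then for all $k\ge1$, $$a_k(x)-a_k(tx)\in\{0,1\},\qquad b_k(x)-b_k(tx)\in\{0,-1\}.$$
   Context: For $y=(y_1,\dots,y_n)$, ${}^-y=(-y_n,\dots,-y_1,y_1,\dots,y_n)$. $p(y)$ is the shape of the Robinson–Schensted tableau of $y$ (row insertion, an inserted entry bumps the leftmost entry strictly greater), and $q(y)$ is the conjugate partition of $p(y)$ (its column lengths); partitions are padded with zeros. *)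

theory Defs
  imports Main
begin

text \<open>A tableau is a list of rows (top row first),
each row a list of integers.\<close>

fun row_insert :: "int list \<Rightarrow> int \<Rightarrow> int list \<times> int option" where
  "row_insert [] v = ([v], None)"
| "row_insert (r # rs) v =
     (if v < r then (v # rs, Some r)
      else (let (rs', b) = row_insert rs v in (r # rs', b)))"

fun rs_insert :: "int list list \<Rightarrow> int \<Rightarrow> int list list" where
  "rs_insert [] v = [[v]]"
| "rs_insert (row # rows) v =
     (case row_insert row v of
        (row', None) \<Rightarrow> row' # rows
      | (row', Some b) \<Rightarrow> row' # rs_insert rows b)"

definition rs_tableau :: "int list \<Rightarrow> int list list" where
  "rs_tableau y = foldl rs_insert [] y"

definition p_shape :: "int list \<Rightarrow> nat \<Rightarrow> nat" where
  "p_shape y i = (let T = rs_tableau y in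
                  if 1 \<le> i \<and> i \<le> length T then length (T ! (i - 1)) else 0)"

definition q_shape :: "int list \<Rightarrow> nat \<Rightarrow> nat" where
  "q_shape y j = (if 1 \<le> j then card {i. 1 \<le> i \<and> p_shape y i \<ge> j} else 0)"

definition neg_double :: "int list \<Rightarrow> int list" where
  "neg_double y = map uminus (rev y) @ y"

definition a_sum :: "nat \<Rightarrow> int list \<Rightarrow> nat" where
  "a_sum k y = (\<Sum>i=1..k. p_shape (neg_double y) i)"

definition b_sum :: "nat \<Rightarrow> int list \<Rightarrow> nat" where
  "b_sum k y = (\<Sum>i=1..k. q_shape (neg_double y) i)"

definition flip_one :: "int list \<Rightarrow> int list" where
  "flip_one x = map (\<lambda>z. if z = 1 then -1 else z) x"

end

theory Submission
  imports Defs "HOL-Combinatorics.Transposition"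
begin

text \<open>By Greene's theorem, $a_k(y)$ is the maximal size of a union of $k$ increasing
  subsequences of ${}^-y$: this number is constant on Knuth classes, the reading word of the
  Robinson-Schensted tableau lies in the Knuth class of the word, and for a reading word it is
  the sum of the $k$ longest rows. Passing from $x$ to $tx$ exchanges the entries $-1$ and $1$
  of ${}^-x$, which are adjacent in value (there is no entry $0$) and occur in the order
  $-1, \dots, 1$. Hence a union of increasing subsequences of ${}^-(tx)$ is one of ${}^-x$,
  and deleting the entry $1$ from a union for ${}^-x$ gives one for ${}^-(tx)$: every $a_k$
  drops by $0$ or $1$. The column sums are determined by the row sums through conjugation,
  $b_c = \min_m (m c + n - a_m)$, which turns this into $b_k(x) - b_k(tx) \in \{0, -1\}$.\<close>

section \<open>Knuth equivalence\<close>

inductive knuth_step :: "int list \<Rightarrow> int list \<Rightarrow> bool" where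
  yxz: "x < y \<Longrightarrow> y < z \<Longrightarrow> knuth_step (u @ [y, x, z] @ v) (u @ [y, z, x] @ v)"
| xzy: "x < y \<Longrightarrow> y < z \<Longrightarrow> knuth_step (u @ [x, z, y] @ v) (u @ [z, x, y] @ v)"

abbreviation knuth_equiv :: "int list \<Rightarrow> int list \<Rightarrow> bool" where
  "knuth_equiv \<equiv> equivclp knuth_step"

lemma knuth_step_append:
  assumes "knuth_step u u'"
  shows "knuth_step (pre @ u @ post) (pre @ u' @ post)"
  using assms
proof induction
  case (yxz x y z u v)
  then show ?case using knuth_step.yxz[of x y z "pre @ u" "v @ post"] by simp
next
  case (xzy x y z u v)
  then show ?case using knuth_step.xzy[of x y z "pre @ u" "v @ post"] by simp
qed

lemma knuth_equiv_append:
  "knuth_equiv u u' \<Longrightarrow> knuth_equiv (pre @ u @ post) (pre @ u' @ post)"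
  by (induction rule: equivclp_induct) (auto intro: equivclp_into_equivclp knuth_step_append)

lemma equivclp_invariant:
  assumes "equivclp r a b" and "\<And>a b. r a b \<Longrightarrow> f a = f b"
  shows "f a = f b"
  using assms(1) by (induction rule: equivclp_induct) (auto dest: assms(2))

lemma knuth_step_set_length: "knuth_step a b \<Longrightarrow> (set a, length a) = (set b, length b)"
  by (induction rule: knuth_step.induct) auto

lemma knuth_equiv_set_length:
  assumes "knuth_equiv a b"
  shows "set a = set b" and "length a = length b"
  using equivclp_invariant[OF assms, of "\<lambda>w. (set w, length w)"] knuth_step_set_length by auto

section \<open>Robinson-Schensted insertion\<close>

lemma row_insert_cases:
  "(\<forall>e\<in>set r. e \<le> v) \<and> row_insert r v = (r @ [v], None) \<or>
   (\<exists>t<length r. (\<forall>j<t. r!j \<le> v) \<and> v < r!t \<and> row_insert r v = (r[t:=v], Some (r!t)))"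
proof (induction r)
  case Nil then show ?case by simp
next
  case (Cons a r)
  show ?case
  proof (cases "v < a")
    case True
    then show ?thesis by (intro disjI2 exI[of _ 0]) auto
  next
    case False
    from Cons.IH show ?thesis
    proof
      assume "(\<forall>e\<in>set r. e \<le> v) \<and> row_insert r v = (r @ [v], None)"
      then show ?thesis using False by auto
    next
      assume "\<exists>t<length r. (\<forall>j<t. r!j \<le> v) \<and> v < r!t \<and> row_insert r v = (r[t:=v], Some (r!t))"
      then obtain t where "t < length r" "\<forall>j<t. r!j \<le> v" "v < r!t"
          "row_insert r v = (r[t:=v], Some (r!t))"
        by blast
      then show ?thesis using False
        by (intro disjI2 exI[of _ "Suc t"]) (auto simp: nth_Cons' less_Suc_eq_0_disj)
    qed
  qed
qed

lemma row_insertE: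
  obtains "\<forall>e\<in>set r. e \<le> v" "row_insert r v = (r @ [v], None)"
  | t where "t < length r" "\<forall>j<t. r!j \<le> v" "v < r!t" "row_insert r v = (r[t:=v], Some (r!t))"
  using row_insert_cases by blast

definition reading_word :: "int list list \<Rightarrow> int list" where
  "reading_word T = concat (rev T)"

lemma reading_word_simps [simp]:
  "reading_word [] = []"
  "reading_word (r # rs) = reading_word rs @ r"
  by (simp_all add: reading_word_def)

lemma knuth_equiv_last_to_second:
  "sorted_wrt (<) (a # vs) \<Longrightarrow> v < a \<Longrightarrow> knuth_equiv (a # vs @ [v]) (a # v # vs)"
proof (induction vs arbitrary: a)
  case Nil then show ?case by simp
next
  case (Cons b vs)
  have "knuth_equiv (a # b # vs @ [v]) (a # b # v # vs)"
    using Cons knuth_equiv_append[of "b # vs @ [v]" "b # v # vs" "[a]" "[]"] by auto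
  also have "knuth_step ([] @ [a, v, b] @ vs) ([] @ [a, b, v] @ vs)"
    using Cons.prems by (intro knuth_step.yxz) auto
  then have "knuth_equiv (a # b # v # vs) (a # v # b # vs)" by auto
  finally show ?case by simp
qed

lemma knuth_equiv_penultimate_to_front:
  "sorted_wrt (<) (us @ [t]) \<Longrightarrow> t < y \<Longrightarrow> knuth_equiv (us @ [y, t]) (y # us @ [t])"
proof (induction us arbitrary: t rule: rev_induct)
  case Nil then show ?case by simp
next
  case (snoc s us)
  have st: "s < t" using snoc.prems by (simp add: sorted_wrt_append)
  have "knuth_step (us @ [s, y, t] @ []) (us @ [y, s, t] @ [])"
    using snoc.prems st by (intro knuth_step.xzy) auto
  then have "knuth_equiv ((us @ [s]) @ [y, t]) ((us @ [y, s]) @ [t])" by auto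
  also have "knuth_equiv ((us @ [y, s]) @ [t]) ((y # us @ [s]) @ [t])"
    using snoc st knuth_equiv_append[of "us @ [y, s]" "y # us @ [s]" "[]" "[t]"]
    by (simp add: sorted_wrt_append)
  finally show ?case by simp
qed

lemma row_insert_knuth_equiv:
  assumes "sorted_wrt (<) R" "v \<notin> set R" and "t < length R" "\<forall>j<t. R!j \<le> v" "v < R!t"
  shows "knuth_equiv (R @ [v]) (R!t # R[t:=v])"
proof -
  define u where "u = take t R"
  define d where "d = drop (Suc t) R"
  define y where "y = R!t"
  have R: "R = u @ y # d"
    unfolding u_def d_def y_def using assms(3) by (rule id_take_nth_drop)
  have R': "R[t:=v] = u @ v # d"
    unfolding u_def d_def using assms(3) by (rule upd_conv_take_nth_drop)
  have u_less: "\<forall>e\<in>set u. e < v"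
    using assms(2,4) by (auto simp: u_def in_set_conv_nth) (metis le_less nth_mem)
  have sorted: "sorted_wrt (<) (u @ y # d)" using assms(1) R by simp
  have "v < y" using assms(5) by (simp add: y_def)
  have "knuth_equiv (u @ y # d @ [v]) (u @ y # v # d)"
    using sorted \<open>v < y\<close> knuth_equiv_append[of "y # d @ [v]" "y # v # d" u "[]"]
      knuth_equiv_last_to_second[of y d v]
    by (simp add: sorted_wrt_append)
  also have "knuth_equiv (u @ y # v # d) (y # u @ v # d)"
    using sorted u_less \<open>v < y\<close> knuth_equiv_append[of "u @ [y, v]" "y # u @ [v]" "[]" d]
      knuth_equiv_penultimate_to_front[of u v y]
    by (simp add: sorted_wrt_append)
  finally show ?thesis unfolding y_def[symmetric] R' by (subst R) simp
qed

lemma rs_insert_knuth_equiv: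
  "\<forall>r\<in>set T. sorted_wrt (<) r \<Longrightarrow> distinct (concat T) \<Longrightarrow> v \<notin> set (concat T)
   \<Longrightarrow> knuth_equiv (reading_word (rs_insert T v)) (reading_word T @ [v])"
proof (induction T arbitrary: v)
  case Nil then show ?case by simp
next
  case (Cons r rs)
  show ?case
  proof (cases r v rule: row_insertE)
    case 1
    then show ?thesis by simp
  next
    case (2 t)
    have "r!t \<notin> set (concat rs)" using Cons.prems(2) 2(1) by (auto dest: nth_mem)
    then have "knuth_equiv (reading_word (rs_insert rs (r!t))) (reading_word rs @ [r!t])"
      using Cons by simp
    from knuth_equiv_append[OF this, of "[]" "r[t:=v]"]
    have "knuth_equiv (reading_word (rs_insert rs (r!t)) @ r[t:=v])
                      (reading_word rs @ r!t # r[t:=v])"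
      by simp
    also have "knuth_equiv (reading_word rs @ r!t # r[t:=v]) (reading_word rs @ r @ [v])"
      using Cons.prems 2 knuth_equiv_append[of "r!t # r[t:=v]" "r @ [v]" "reading_word rs" "[]"]
        equivclp_sym[OF row_insert_knuth_equiv[of r v t]]
      by simp
    finally show ?thesis using 2 by simp
  qed
qed

fun fits_above :: "int list \<Rightarrow> int list list \<Rightarrow> bool" where
  "fits_above p [] = True"
| "fits_above p (r # rs) = (length r \<le> length p \<and> (\<forall>j<length r. p!j < r!j))"

fun is_tableau :: "int list list \<Rightarrow> bool" where
  "is_tableau [] = True"
| "is_tableau (r # rs) = (r \<noteq> [] \<and> sorted_wrt (<) r \<and> fits_above r rs \<and> is_tableau rs)"

lemma is_tableau_rows_sorted: "is_tableau T \<Longrightarrow> \<forall>r\<in>set T. sorted_wrt (<) r"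
  by (induction T rule: is_tableau.induct) auto

lemma is_tableau_append_row:
  assumes "is_tableau (r # rs)" "\<forall>e\<in>set r. e < v"
  shows "is_tableau ((r @ [v]) # rs)"
  using assms by (cases rs) (auto simp: sorted_wrt_append nth_append)

lemma is_tableau_update_row:
  assumes "is_tableau (r # rs)" "t < length r" "\<forall>j<t. r!j < v" "v < r!t"
  shows "is_tableau (r[t:=v] # rs)"
proof -
  have r_less: "\<And>i j. i < j \<Longrightarrow> j < length r \<Longrightarrow> r!i < r!j"
    using assms(1) by (simp add: sorted_wrt_iff_nth_less)
  have "sorted_wrt (<) (r[t:=v])"
    unfolding sorted_wrt_iff_nth_less
  proof (intro allI impI)
    fix i j assume "i < j" "j < length (r[t:=v])"
    then show "r[t:=v]!i < r[t:=v]!j"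
      using assms(2-4) r_less[of i j] r_less[of t j] by (auto simp: nth_list_update intro: less_trans)
  qed
  moreover have "fits_above (r[t:=v]) rs"
    using assms by (cases rs) (auto simp: nth_list_update sorted_wrt_iff_nth_less intro: less_trans)
  ultimately show ?thesis using assms by auto
qed

lemma fits_above_append:
  assumes "fits_above p (r # rs)" "length r < length p" "p ! length r < v"
  shows "fits_above p ((r @ [v]) # rs')"
proof -
  have "p!i < (r @ [v])!i" if "i < length (r @ [v])" for i
  proof (cases "i < length r")
    case False
    then have "i = length r" using that by simp
    then show ?thesis using assms(3) by (simp add: nth_append)
  qed (use assms(1) in \<open>simp add: nth_append\<close>)
  then show ?thesis using assms(2) by simp
qed

lemma fits_above_update:
  assumes "fits_above p (r # rs)" "t < length r" "p!t < v"
  shows "fits_above p (r[t:=v] # rs')"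
  using assms by (auto simp: nth_list_update)

text \<open>Invariant of the bumping phase: the entry $v$ arriving at \<open>rows\<close> was bumped from
  column \<open>j\<close> of the row \<open>p\<close> just above.\<close>

lemma is_tableau_rs_insert_below:
  "is_tableau (p # rows) \<Longrightarrow> distinct (concat rows) \<Longrightarrow> v \<notin> set (concat rows)
   \<Longrightarrow> j < length p \<Longrightarrow> p!j < v \<Longrightarrow> (\<forall>r rs. rows = r # rs \<longrightarrow> j < length r \<longrightarrow> v < r!j)
   \<Longrightarrow> is_tableau (p # rs_insert rows v)"
proof (induction rows arbitrary: p v j)
  case Nil
  then have "p!0 \<le> p!j" by (cases j) (auto simp: sorted_wrt_iff_nth_less less_imp_le)
  then show ?case using Nil by auto
next
  case (Cons r rest)
  have p_less: "p!i < v" if "i \<le> j" for i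
  proof -
    have "p!i \<le> p!j"
      using Cons.prems(1,4) that by (cases "i = j") (auto simp: sorted_wrt_iff_nth_less less_imp_le)
    then show ?thesis using Cons.prems(5) by simp
  qed
  show ?case
  proof (cases r v rule: row_insertE)
    case 1
    have "\<forall>e\<in>set r. e < v" using 1 Cons.prems(3) by (auto simp: le_less)
    then have "is_tableau ((r @ [v]) # rest)"
      using Cons.prems(1) by (intro is_tableau_append_row) auto
    moreover have "length r \<le> j"
      using 1 Cons.prems(6) by (metis leI nth_mem not_le)
    then have "fits_above p ((r @ [v]) # rest)"
      using Cons.prems(1,4) p_less by (intro fits_above_append) auto
    ultimately show ?thesis using 1 Cons.prems(1) by auto
  next
    case (2 t)
    have "t \<le> j"
    proof (rule ccontr)
      assume "\<not> t \<le> j"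
      then have "j < length r" "r!j \<le> v" using 2(1,2) by auto
      then show False using Cons.prems(6) by auto
    qed
    have r_less: "\<forall>i<t. r!i < v" using 2 Cons.prems(3) by (auto simp: le_less dest: nth_mem)
    have "is_tableau (r[t:=v] # rest)"
      using Cons.prems(1) 2 r_less by (intro is_tableau_update_row) auto
    moreover have "r!t \<notin> set (concat rest)" using Cons.prems(2) 2(1) by (auto dest: nth_mem)
    moreover have "\<forall>r' rs. rest = r' # rs \<longrightarrow> t < length r' \<longrightarrow> r!t < r'!t"
      using Cons.prems(1) by auto
    ultimately have "is_tableau (r[t:=v] # rs_insert rest (r!t))"
      using Cons.prems(2) 2 by (intro Cons.IH) auto
    moreover have "fits_above p (r[t:=v] # rs_insert rest (r!t))"
      using Cons.prems(1) p_less \<open>t \<le> j\<close> 2(1) by (intro fits_above_update) auto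
    ultimately show ?thesis using Cons.prems(1) 2 by auto
  qed
qed

lemma is_tableau_rs_insert:
  assumes "is_tableau T" "distinct (concat T)" "v \<notin> set (concat T)"
  shows "is_tableau (rs_insert T v)"
proof (cases T)
  case Nil then show ?thesis by simp
next
  case (Cons r rest)
  show ?thesis
  proof (cases r v rule: row_insertE)
    case 1
    then show ?thesis
      using assms Cons is_tableau_append_row[of r rest v] by (auto simp: le_less)
  next
    case (2 t)
    have r_less: "\<forall>i<t. r!i < v" using 2 assms(3) Cons by (auto simp: le_less dest: nth_mem)
    have "is_tableau (r[t:=v] # rest)"
      using assms(1) Cons 2 r_less by (intro is_tableau_update_row) auto
    then have "is_tableau (r[t:=v] # rs_insert rest (r!t))"
      using assms Cons 2 by (intro is_tableau_rs_insert_below) (auto dest: nth_mem)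
    then show ?thesis using Cons 2 by simp
  qed
qed

lemma set_reading_word: "set (reading_word T) = set (concat T)"
  by (simp add: reading_word_def)

lemma distinct_reading_word: "distinct (reading_word T) = distinct (concat T)"
  by (induction T) (auto simp: set_reading_word)

lemma rs_tableau_invariant:
  assumes "distinct w"
  shows "is_tableau (rs_tableau w) \<and> knuth_equiv (reading_word (rs_tableau w)) w"
  using assms
proof (induction w rule: rev_induct)
  case Nil then show ?case by (simp add: rs_tableau_def)
next
  case (snoc v w)
  define T where "T = rs_tableau w"
  have IH: "is_tableau T" "knuth_equiv (reading_word T) w" using snoc by (auto simp: T_def)
  have "set (reading_word T) = set w" "length (reading_word T) = length w"
    using knuth_equiv_set_length[OF IH(2)] by auto
  then have "distinct (reading_word T)" using snoc.prems by (metis card_distinct distinct_append distinct_card)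
  then have dT: "distinct (concat T)" by (simp add: distinct_reading_word)
  have vT: "v \<notin> set (concat T)"
    using \<open>set (reading_word T) = set w\<close> snoc.prems by (simp add: set_reading_word)
  have "knuth_equiv (reading_word (rs_insert T v)) (reading_word T @ [v])"
    using is_tableau_rows_sorted[OF IH(1)] dT vT by (rule rs_insert_knuth_equiv)
  also have "knuth_equiv (reading_word T @ [v]) (w @ [v])"
    using knuth_equiv_append[OF IH(2), of "[]" "[v]"] by simp
  finally show ?case
    using is_tableau_rs_insert[OF IH(1) dT vT] by (simp add: rs_tableau_def T_def)
qed

section \<open>Greene's invariant\<close>

text \<open>A union of \<open>k\<close> increasing subsequences of \<open>w\<close> is encoded as a set \<open>S\<close> of positions
  with a colouring \<open>c\<close> by \<open>k\<close> colours whose colour classes are increasing.\<close>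

definition incr_colouring :: "int list \<Rightarrow> nat \<Rightarrow> nat set \<Rightarrow> (nat \<Rightarrow> nat) \<Rightarrow> bool" where
  "incr_colouring w k S c \<longleftrightarrow> S \<subseteq> {..<length w} \<and> (\<forall>i\<in>S. c i < k) \<and>
     (\<forall>i\<in>S. \<forall>j\<in>S. i < j \<and> c i = c j \<longrightarrow> w!i < w!j)"

definition greene :: "nat \<Rightarrow> int list \<Rightarrow> nat" where
  "greene k w = Max {card S | S c. incr_colouring w k S c}"

lemma incr_colouringD:
  "incr_colouring w k S c \<Longrightarrow> i \<in> S \<Longrightarrow> j \<in> S \<Longrightarrow> i < j \<Longrightarrow> c i = c j \<Longrightarrow> w!i < w!j"
  unfolding incr_colouring_def by blast

lemma finite_greene_candidates: "finite {card S | S c. incr_colouring w k S c}"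
proof (rule finite_subset)
  show "{card S | S c. incr_colouring w k S c} \<subseteq> {..length w}"
  proof
    fix n assume "n \<in> {card S | S c. incr_colouring w k S c}"
    then obtain S c where "n = card S" "incr_colouring w k S c" by blast
    then show "n \<in> {..length w}"
      using card_mono[of "{..<length w}" S] by (auto simp: incr_colouring_def)
  qed
qed simp

lemma card_le_greene: "incr_colouring w k S c \<Longrightarrow> card S \<le> greene k w"
  unfolding greene_def by (rule Max_ge[OF finite_greene_candidates]) blast

lemma greene_attained:
  obtains S c where "incr_colouring w k S c" "card S = greene k w"
proof -
  have "incr_colouring w k {} (\<lambda>_. 0)" by (simp add: incr_colouring_def)
  then have "{card S | S c. incr_colouring w k S c} \<noteq> {}" by blast
  then have "greene k w \<in> {card S | S c. incr_colouring w k S c}"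
    unfolding greene_def by (rule Max_in[OF finite_greene_candidates])
  then show ?thesis using that by auto
qed

lemma transpose_Suc_less_cases:
  "Transposition.transpose p (Suc p) a < Transposition.transpose p (Suc p) b
   \<Longrightarrow> a < b \<or> (a = Suc p \<and> b = p)"
  by (auto simp: transpose_def split: if_splits)

lemma transpose_Suc_less_bound: "Suc p < n \<Longrightarrow> i < n \<Longrightarrow> Transposition.transpose p (Suc p) i < n"
  by (auto simp: transpose_def)

lemma incr_colouring_swap_adjacent:
  assumes "incr_colouring w k S c" and apart: "\<not> (p \<in> S \<and> Suc p \<in> S \<and> c p = c (Suc p))"
    and len: "length w' = length w" "Suc p < length w"
    and w': "\<forall>i<length w. w'!i = w!(Transposition.transpose p (Suc p) i)"
  shows "incr_colouring w' k (Transposition.transpose p (Suc p) ` S) (c \<circ> Transposition.transpose p (Suc p))"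
  unfolding incr_colouring_def
proof (intro conjI ballI impI)
  let ?\<sigma> = "Transposition.transpose p (Suc p)"
  have S: "S \<subseteq> {..<length w}" "\<forall>i\<in>S. c i < k" using assms(1) by (auto simp: incr_colouring_def)
  then show "?\<sigma> ` S \<subseteq> {..<length w'}" using len transpose_Suc_less_bound by auto
  show "(c \<circ> ?\<sigma>) i < k" if "i \<in> ?\<sigma> ` S" for i using that S by auto
  fix i j assume ij: "i \<in> ?\<sigma> ` S" "j \<in> ?\<sigma> ` S" "i < j \<and> (c \<circ> ?\<sigma>) i = (c \<circ> ?\<sigma>) j"
  then obtain a b where ab: "a \<in> S" "b \<in> S" "i = ?\<sigma> a" "j = ?\<sigma> b" by blast
  have "c a = c b" using ij ab by simp
  moreover have "a < b \<or> (a = Suc p \<and> b = p)" using transpose_Suc_less_cases ij ab by simp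
  ultimately have "a < b" using apart ab by auto
  then have "w!a < w!b" using incr_colouringD[OF assms(1)] ab \<open>c a = c b\<close> by blast
  moreover have "a < length w" "b < length w" using S ab by auto
  ultimately show "w'!i < w'!j" using w' ab len transpose_Suc_less_bound[of p "length w"] by auto
qed

lemma greene_le_swap_adjacent:
  assumes separate: "\<And>S c. incr_colouring w k S c \<Longrightarrow> \<exists>S' c'. incr_colouring w k S' c' \<and>
                          card S \<le> card S' \<and> \<not> (p \<in> S' \<and> Suc p \<in> S' \<and> c' p = c' (Suc p))"
    and len: "length w' = length w" "Suc p < length w"
    and w': "\<forall>i<length w. w'!i = w!(Transposition.transpose p (Suc p) i)"
  shows "greene k w \<le> greene k w'"
proof -
  obtain S c where S: "incr_colouring w k S c" "card S = greene k w" by (rule greene_attained)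
  obtain S' c' where S': "incr_colouring w k S' c'" "card S \<le> card S'"
      "\<not> (p \<in> S' \<and> Suc p \<in> S' \<and> c' p = c' (Suc p))" using separate[OF S(1)] by blast
  have "card (Transposition.transpose p (Suc p) ` S') \<le> greene k w'"
    by (rule card_le_greene[OF incr_colouring_swap_adjacent[OF S'(1) S'(3) len w']])
  then show ?thesis using S S' by (simp add: card_image)
qed

lemma greene_le_swap_descent:
  assumes "w!(Suc p) < w!p"
    and "length w' = length w" "Suc p < length w"
    and "\<forall>i<length w. w'!i = w!(Transposition.transpose p (Suc p) i)"
  shows "greene k w \<le> greene k w'"
proof (rule greene_le_swap_adjacent[OF _ assms(2-4)])
  fix S c assume S: "incr_colouring w k S c"
  have "\<not> (p \<in> S \<and> Suc p \<in> S \<and> c p = c (Suc p))"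
    using incr_colouringD[OF S, of p "Suc p"] assms(1) by auto
  then show "\<exists>S' c'. incr_colouring w k S' c' \<and> card S \<le> card S'
               \<and> \<not> (p \<in> S' \<and> Suc p \<in> S' \<and> c' p = c' (Suc p))"
    using S by blast
qed

lemma incr_colouring_recolour:
  assumes S: "incr_colouring w k S c" and "a < k" "b < k"
    and cross: "\<And>i j. i \<in> S \<Longrightarrow> j \<in> S \<Longrightarrow> i \<le> q \<Longrightarrow> q < j \<Longrightarrow> {c i, c j} = {a, b} \<Longrightarrow> w!i < w!j"
  shows "incr_colouring w k S (\<lambda>i. if q < i then Transposition.transpose a b (c i) else c i)"
  unfolding incr_colouring_def
proof (intro conjI ballI impI)
  show "S \<subseteq> {..<length w}" using S by (simp add: incr_colouring_def)
  show "(if q < i then Transposition.transpose a b (c i) else c i) < k" if "i \<in> S" for i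
    using S that \<open>a < k\<close> \<open>b < k\<close> by (auto simp: incr_colouring_def transpose_def)
  fix i j assume ij: "i \<in> S" "j \<in> S"
    "i < j \<and> (if q < i then Transposition.transpose a b (c i) else c i)
           = (if q < j then Transposition.transpose a b (c j) else c j)"
  consider "q < i" | "j \<le> q" | "i \<le> q" "q < j" by linarith
  then show "w!i < w!j"
  proof cases
    case 1
    then have "Transposition.transpose a b (c i) = Transposition.transpose a b (c j)" using ij by simp
    then have "c i = c j" by (rule transpose_eq_imp_eq)
    then show ?thesis using incr_colouringD[OF S] ij by blast
  next
    case 2
    then have "c i = c j" using ij by (auto split: if_splits)
    then show ?thesis using incr_colouringD[OF S] ij by blast
  next
    case 3
    then have "c i = Transposition.transpose a b (c j)" using ij by simp
    then have "c i = c j \<or> {c i, c j} = {a, b}" by (auto simp: transpose_def split: if_splits)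
    then show ?thesis using incr_colouringD[OF S] cross[OF ij(1,2) 3] ij by blast
  qed
qed

lemma incr_colouring_exchange:
  assumes S: "incr_colouring w k S c" and "Suc (Suc m) < length w"
    and "m \<notin> S" "Suc m \<in> S" "Suc (Suc m) \<in> S" "c (Suc m) = c (Suc (Suc m))"
    and "w!(Suc m) < w!m" "w!m < w!(Suc (Suc m))"
  shows "incr_colouring w k (insert m (S - {Suc m})) (c(m := c (Suc m)))"
  unfolding incr_colouring_def
proof (intro conjI ballI impI)
  show "insert m (S - {Suc m}) \<subseteq> {..<length w}" using S assms(2) by (auto simp: incr_colouring_def)
  show "(c(m := c (Suc m))) i < k" if "i \<in> insert m (S - {Suc m})" for i
    using S that assms(4) by (auto simp: incr_colouring_def)
  have mono: "\<And>i j. i \<in> S \<Longrightarrow> j \<in> S \<Longrightarrow> i < j \<Longrightarrow> c i = c j \<Longrightarrow> w!i < w!j"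
    by (rule incr_colouringD[OF S])
  fix i j assume ij: "i \<in> insert m (S - {Suc m})" "j \<in> insert m (S - {Suc m})"
    "i < j \<and> (c(m := c (Suc m))) i = (c(m := c (Suc m))) j"
  consider "i = m" | "j = m" | "i \<noteq> m" "j \<noteq> m" by blast
  then show "w!i < w!j"
  proof cases
    case 1
    then have "j \<in> S" "Suc (Suc m) \<le> j" "c j = c (Suc (Suc m))" using ij assms(6) by auto
    then have "w!(Suc (Suc m)) \<le> w!j"
      using mono[of "Suc (Suc m)" j] assms(5) by (cases "j = Suc (Suc m)") auto
    then show ?thesis using 1 assms(8) by simp
  next
    case 2
    then have "i \<in> S" "i < Suc m" "c i = c (Suc m)" using ij by auto
    then have "w!i < w!(Suc m)" using mono[of i "Suc m"] assms(4) by simp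
    then show ?thesis using 2 assms(7) by simp
  next
    case 3
    then show ?thesis using ij mono by auto
  qed
qed

text \<open>If $x$ and $z$ share a colour, either $x$ is replaced by the uncoloured $y$, or the
  colour classes of $x$ and $y$ exchange their parts to the right of $x$.\<close>

lemma incr_colouring_separate_yxz:
  assumes len: "Suc (Suc m) < length w" and xy: "w!(Suc m) < w!m" and yz: "w!m < w!(Suc (Suc m))"
    and S: "incr_colouring w k S c"
  shows "\<exists>S' c'. incr_colouring w k S' c' \<and> card S \<le> card S' \<and>
           \<not> (Suc m \<in> S' \<and> Suc (Suc m) \<in> S' \<and> c' (Suc m) = c' (Suc (Suc m)))"
proof (cases "Suc m \<in> S \<and> Suc (Suc m) \<in> S \<and> c (Suc m) = c (Suc (Suc m))")
  case False
  then show ?thesis using S by blast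
next
  case same: True
  have mono: "\<And>i j. i \<in> S \<Longrightarrow> j \<in> S \<Longrightarrow> i < j \<Longrightarrow> c i = c j \<Longrightarrow> w!i < w!j"
    by (rule incr_colouringD[OF S])
  show ?thesis
  proof (cases "m \<in> S")
    case False
    have "finite S" using S finite_subset by (auto simp: incr_colouring_def)
    moreover have "card S > 0" using \<open>finite S\<close> same by (auto simp: card_gt_0_iff)
    ultimately have "card (insert m (S - {Suc m})) = card S"
      using same False by (simp add: card.insert_remove)
    moreover have "incr_colouring w k (insert m (S - {Suc m})) (c(m := c (Suc m)))"
      using same by (intro incr_colouring_exchange[OF S len False _ _ _ xy yz]) auto
    ultimately show ?thesis by (intro exI[of _ "insert m (S - {Suc m})"] exI) auto
  next
    case True
    define a where "a = c (Suc m)"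
    define b where "b = c m"
    have "a \<noteq> b" using mono[of m "Suc m"] True same xy by (auto simp: a_def b_def)
    have "a < k" "b < k" using S same True by (auto simp: incr_colouring_def a_def b_def)
    have "incr_colouring w k S (\<lambda>i. if Suc m < i then Transposition.transpose a b (c i) else c i)"
    proof (rule incr_colouring_recolour[OF S \<open>a < k\<close> \<open>b < k\<close>])
      fix i j assume ij: "i \<in> S" "j \<in> S" "i \<le> Suc m" "Suc m < j" "{c i, c j} = {a, b}"
      then consider "c i = a" "c j = b" | "c i = b" "c j = a" "i \<le> m"
        using \<open>a \<noteq> b\<close> by (metis a_def doubleton_eq_iff le_SucE)
      then show "w!i < w!j"
      proof cases
        case 1
        have "w!i \<le> w!(Suc m)" using mono[of i "Suc m"] ij 1 same by (cases "i = Suc m") (auto simp: a_def)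
        moreover have "w!m < w!j" using mono[of m j] ij 1 True by (simp add: b_def)
        ultimately show ?thesis using xy by simp
      next
        case 2
        have "w!i \<le> w!m" using mono[of i m] ij 2 True by (cases "i = m") (auto simp: b_def)
        moreover have "w!(Suc (Suc m)) \<le> w!j"
          using mono[of "Suc (Suc m)" j] ij 2 same by (cases "j = Suc (Suc m)") (auto simp: a_def)
        ultimately show ?thesis using yz by simp
      qed
    qed
    moreover have "Transposition.transpose a b (c (Suc (Suc m))) \<noteq> c (Suc m)"
      using same \<open>a \<noteq> b\<close> by (simp add: a_def)
    ultimately show ?thesis by (intro exI conjI) auto
  qed
qed

lemma incr_colouring_rev_neg:
  assumes S: "incr_colouring w k S c"
  defines "\<rho> \<equiv> \<lambda>i. length w - Suc i"
  shows "incr_colouring (map uminus (rev w)) k (\<rho> ` S) (c \<circ> \<rho>)"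
  unfolding incr_colouring_def
proof (intro conjI ballI impI)
  have S_less: "S \<subseteq> {..<length w}" using S by (simp add: incr_colouring_def)
  then show "\<rho> ` S \<subseteq> {..<length (map uminus (rev w))}" by (auto simp: \<rho>_def)
  show "(c \<circ> \<rho>) i < k" if "i \<in> \<rho> ` S" for i
    using S that by (auto simp: incr_colouring_def \<rho>_def)
  fix i j assume ij: "i \<in> \<rho> ` S" "j \<in> \<rho> ` S" "i < j \<and> (c \<circ> \<rho>) i = (c \<circ> \<rho>) j"
  then obtain a b where ab: "a \<in> S" "b \<in> S" "i = \<rho> a" "j = \<rho> b" by blast
  have "a < length w" "b < length w" using ab S_less by auto
  then have "b < a" "\<rho> (\<rho> a) = a" "\<rho> (\<rho> b) = b" using ij ab by (auto simp: \<rho>_def)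
  then have "w!b < w!a" using incr_colouringD[OF S ab(2,1)] ij ab by simp
  then show "map uminus (rev w) ! i < map uminus (rev w) ! j"
    using ab \<open>a < length w\<close> \<open>b < length w\<close> \<open>\<rho> (\<rho> a) = a\<close> \<open>\<rho> (\<rho> b) = b\<close>
    by (simp add: rev_nth \<rho>_def)
qed

lemma greene_le_rev_neg: "greene k w \<le> greene k (map uminus (rev w))"
proof -
  obtain S c where S: "incr_colouring w k S c" "card S = greene k w" by (rule greene_attained)
  have "inj_on (\<lambda>i. length w - Suc i) {..<length w}" by (auto simp: inj_on_def)
  then have "inj_on (\<lambda>i. length w - Suc i) S"
    using S(1) by (auto simp: incr_colouring_def intro: inj_on_subset)
  then show ?thesis
    using card_le_greene[OF incr_colouring_rev_neg[OF S(1)]] S(2) by (simp add: card_image)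
qed

lemma greene_rev_neg: "greene k (map uminus (rev w)) = greene k w"
  using greene_le_rev_neg[of k w] greene_le_rev_neg[of k "map uminus (rev w)"]
  by (simp add: rev_map)

lemma greene_knuth_yxz:
  assumes "x < y" "y < z"
  shows "greene k (u @ [y, x, z] @ v) = greene k (u @ [y, z, x] @ v)"
proof -
  define m where "m = length u"
  define A where "A = u @ [y, x, z] @ v"
  define B where "B = u @ [y, z, x] @ v"
  have A: "A!m = y" "A!(Suc m) = x" "A!(Suc (Suc m)) = z" and B: "B!(Suc m) = z" "B!(Suc (Suc m)) = x"
    by (simp_all add: m_def A_def B_def nth_append)
  have len: "length B = length A" "Suc (Suc m) < length A" by (simp_all add: A_def B_def m_def)
  have BA: "\<forall>i<length A. B!i = A!(Transposition.transpose (Suc m) (Suc (Suc m)) i)"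
    by (auto simp: A_def B_def m_def transpose_def nth_append nth_Cons')
  have AB: "\<forall>i<length B. A!i = B!(Transposition.transpose (Suc m) (Suc (Suc m)) i)"
    by (auto simp: A_def B_def m_def transpose_def nth_append nth_Cons')
  have "greene k A \<le> greene k B"
  proof (rule greene_le_swap_adjacent[OF _ len BA])
    fix S c assume "incr_colouring A k S c"
    then show "\<exists>S' c'. incr_colouring A k S' c' \<and> card S \<le> card S'
        \<and> \<not> (Suc m \<in> S' \<and> Suc (Suc m) \<in> S' \<and> c' (Suc m) = c' (Suc (Suc m)))"
      using A assms len by (intro incr_colouring_separate_yxz) auto
  qed
  moreover have "greene k B \<le> greene k A"
    by (rule greene_le_swap_descent[OF _ _ _ AB]) (use B assms len in auto)
  ultimately show ?thesis by (simp add: A_def B_def)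
qed

text \<open>The second Knuth relation is the first one for the reversed and negated words.\<close>

lemma greene_knuth_step: "knuth_step a b \<Longrightarrow> greene k a = greene k b"
proof (induction rule: knuth_step.induct)
  case (yxz x y z u v)
  then show ?case by (rule greene_knuth_yxz)
next
  case (xzy x y z u v)
  have "greene k (map uminus (rev v) @ [- y, - z, - x] @ map uminus (rev u))
      = greene k (map uminus (rev v) @ [- y, - x, - z] @ map uminus (rev u))"
    using xzy by (intro greene_knuth_yxz) auto
  then show ?case using greene_rev_neg[of k "u @ [x, z, y] @ v"] greene_rev_neg[of k "u @ [z, x, y] @ v"]
    by simp
qed

lemma greene_knuth_equiv: "knuth_equiv a b \<Longrightarrow> greene k a = greene k b"
  by (erule equivclp_invariant) (rule greene_knuth_step)

section \<open>Greene's theorem for rows\<close>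

definition row_sum :: "nat \<Rightarrow> int list list \<Rightarrow> nat" where
  "row_sum k T = sum_list (map length (take k T))"

lemma row_sum_simps [simp]:
  "row_sum 0 T = 0"
  "row_sum k [] = 0"
  "row_sum (Suc k) (r # rs) = length r + row_sum k rs"
  by (simp_all add: row_sum_def)

lemma greene_append_sorted:
  assumes r: "sorted_wrt (<) r"
  shows "greene k u + length r \<le> greene (Suc k) (u @ r)"
proof -
  obtain S c where S: "incr_colouring u k S c" "card S = greene k u" by (rule greene_attained)
  define S' where "S' = S \<union> {length u..<length u + length r}"
  define c' where "c' = (\<lambda>i. if i < length u then c i else k)"
  have S_less: "S \<subseteq> {..<length u}" using S by (simp add: incr_colouring_def)
  have "incr_colouring (u @ r) (Suc k) S' c'"
    unfolding incr_colouring_def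
  proof (intro conjI ballI impI)
    show "S' \<subseteq> {..<length (u @ r)}" using S_less by (auto simp: S'_def)
    show "c' i < Suc k" if "i \<in> S'" for i
      using S(1) S_less that by (auto simp: S'_def c'_def incr_colouring_def)
    fix i j assume ij: "i \<in> S'" "j \<in> S'" "i < j \<and> c' i = c' j"
    show "(u @ r)!i < (u @ r)!j"
    proof (cases "j < length u")
      case True
      then have "i \<in> S" "j \<in> S" "c i = c j" using ij by (auto simp: S'_def c'_def)
      then show ?thesis using incr_colouringD[OF S(1)] ij True by (auto simp: nth_append)
    next
      case False
      have "\<not> i < length u"
      proof
        assume "i < length u"
        then have "c i < k" using ij S(1) by (auto simp: S'_def incr_colouring_def)
        then show False using ij \<open>i < length u\<close> False by (simp add: c'_def)
      qed
      then have "j - length u < length r" "i - length u < j - length u"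
        using ij False S_less by (auto simp: S'_def)
      then show ?thesis
        using r False \<open>\<not> i < length u\<close> by (simp add: sorted_wrt_iff_nth_less nth_append)
    qed
  qed
  then have "card S' \<le> greene (Suc k) (u @ r)" by (rule card_le_greene)
  moreover have "card S' = card S + length r"
  proof -
    have "finite S" using S_less finite_subset by blast
    moreover have "S \<inter> {length u..<length u + length r} = {}" using S_less by auto
    ultimately show ?thesis by (simp add: S'_def card_Un_disjoint)
  qed
  ultimately show ?thesis using S by simp
qed

lemma row_sum_le_greene: "\<forall>r\<in>set T. sorted_wrt (<) r \<Longrightarrow> row_sum k T \<le> greene k (reading_word T)"
proof (induction T arbitrary: k)
  case Nil then show ?case by simp
next
  case (Cons r rs)
  show ?case
  proof (cases k)
    case 0 then show ?thesis by simp
  next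
    case (Suc k')
    have "row_sum k (r # rs) \<le> greene k' (reading_word rs) + length r" using Cons Suc by simp
    also have "\<dots> \<le> greene k (reading_word (r # rs))"
      using greene_append_sorted[of r k' "reading_word rs"] Cons.prems Suc by simp
    finally show ?thesis .
  qed
qed

text \<open>Row and column of the cell holding the \<open>q\<close>-th letter of the reading word, which lists
  the rows from the bottom one to the top one.\<close>

fun reading_row :: "int list list \<Rightarrow> nat \<Rightarrow> nat" where
  "reading_row [] q = 0"
| "reading_row (r # rs) q = (if q < length (reading_word rs) then Suc (reading_row rs q) else 0)"

fun reading_col :: "int list list \<Rightarrow> nat \<Rightarrow> nat" where
  "reading_col [] q = q"
| "reading_col (r # rs) q =
     (if q < length (reading_word rs) then reading_col rs q else q - length (reading_word rs))"

definition column_length :: "int list list \<Rightarrow> nat \<Rightarrow> nat" where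
  "column_length T j = length (filter (\<lambda>r. j < length r) T)"

lemma reading_word_nth_cell:
  "q < length (reading_word T) \<Longrightarrow> reading_row T q < length T
   \<and> reading_col T q < length (T ! reading_row T q)
   \<and> reading_word T ! q = T ! reading_row T q ! reading_col T q"
  by (induction T) (auto simp: nth_append)

lemma is_tableau_fits_above_lower_rows:
  "is_tableau (r # rs) \<Longrightarrow> i < length rs
   \<Longrightarrow> length (rs!i) \<le> length r \<and> (\<forall>j < length (rs!i). r!j < rs!i!j)"
proof (induction rs arbitrary: r i)
  case Nil then show ?case by simp
next
  case (Cons r' rs)
  show ?case
  proof (cases i)
    case 0 then show ?thesis using Cons.prems by simp
  next
    case (Suc i')
    have IH: "length (rs!i') \<le> length r' \<and> (\<forall>j < length (rs!i'). r'!j < rs!i'!j)"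
      using Cons.IH[of r' i'] Cons.prems Suc by simp
    have "length r' \<le> length r" "\<forall>j<length r'. r!j < r'!j" using Cons.prems by auto
    moreover have "r!j < rs!i'!j" if "j < length (rs!i')" for j
    proof -
      have "j < length r'" using IH that by simp
      then show ?thesis using IH that \<open>\<forall>j<length r'. r!j < r'!j\<close> by (meson less_trans)
    qed
    ultimately show ?thesis using IH Suc by auto
  qed
qed

lemma is_tableau_row_lengths: "is_tableau T \<Longrightarrow> sorted_wrt (\<ge>) (map length T)"
proof (induction T)
  case Nil then show ?case by simp
next
  case (Cons r rs)
  then show ?case
    using is_tableau_fits_above_lower_rows[OF Cons.prems] by (auto simp: in_set_conv_nth)
qed

text \<open>This is why a column meets every increasing subsequence of the reading word at most once.\<close>

lemma reading_word_column_decreasing: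
  "is_tableau T \<Longrightarrow> q < q' \<Longrightarrow> q' < length (reading_word T)
   \<Longrightarrow> reading_col T q = reading_col T q' \<Longrightarrow> reading_word T ! q' < reading_word T ! q"
proof (induction T)
  case Nil then show ?case by simp
next
  case (Cons r rs)
  define L where "L = length (reading_word rs)"
  consider "q' < L" | "q < L" "\<not> q' < L" | "\<not> q < L" using Cons.prems(2) by linarith
  then show ?case
  proof cases
    case 1
    then show ?thesis using Cons by (simp add: nth_append L_def)
  next
    case 2
    define j where "j = q' - L"
    have col: "reading_col rs q = j" using Cons.prems(4) 2 by (simp add: L_def j_def)
    note cell = reading_word_nth_cell[of q rs]
    have "r!j < rs ! reading_row rs q ! j"
      using is_tableau_fits_above_lower_rows[OF Cons.prems(1)] cell 2(1) col by (simp add: L_def)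
    then show ?thesis using 2 cell col by (simp add: nth_append L_def j_def)
  next
    case 3
    then show ?thesis using Cons.prems by (simp add: L_def)
  qed
qed

lemma card_reading_col: "card {q. q < length (reading_word T) \<and> reading_col T q = j} = column_length T j"
proof (induction T)
  case Nil then show ?case by (simp add: column_length_def)
next
  case (Cons r rs)
  define L where "L = length (reading_word rs)"
  have "{q. q < length (reading_word (r # rs)) \<and> reading_col (r # rs) q = j} =
      {q. q < L \<and> reading_col rs q = j} \<union> (if j < length r then {L + j} else {})"
    by (auto simp: L_def)
  then show ?case using Cons by (simp add: L_def column_length_def card_insert_if)
qed

lemma sum_min_column_length:
  "is_tableau T \<Longrightarrow> \<forall>r\<in>set T. length r \<le> N \<Longrightarrow> (\<Sum>j<N. min k (column_length T j)) = row_sum k T"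
proof (induction T arbitrary: k)
  case Nil then show ?case by (simp add: column_length_def)
next
  case (Cons r rs)
  show ?case
  proof (cases k)
    case 0 then show ?thesis by simp
  next
    case (Suc k')
    have short: "column_length rs j = 0" if "length r \<le> j" for j
      using that is_tableau_fits_above_lower_rows[OF Cons.prems(1)]
      by (auto simp: column_length_def filter_empty_conv in_set_conv_nth) (meson le_trans not_le)
    have "min k (column_length (r # rs) j) = (if j < length r then 1 else 0) + min k' (column_length rs j)" for j
      using short[of j] Suc by (auto simp: column_length_def)
    then have "(\<Sum>j<N. min k (column_length (r # rs) j))
        = (\<Sum>j<N. if j < length r then 1 else 0) + (\<Sum>j<N. min k' (column_length rs j))"
      by (simp add: sum.distrib)
    also have "(\<Sum>j<N. if j < length r then 1 else 0 :: nat) = length r"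
    proof -
      have "{..<N} \<inter> {j. j < length r} = {..<length r}" using Cons.prems(2) by auto
      then show ?thesis by (simp add: sum.If_cases)
    qed
    also have "(\<Sum>j<N. min k' (column_length rs j)) = row_sum k' rs" using Cons by simp
    finally show ?thesis using Suc by simp
  qed
qed

lemma greene_le_row_sum:
  assumes T: "is_tableau T"
  shows "greene k (reading_word T) \<le> row_sum k T"
proof -
  obtain S c where S: "incr_colouring (reading_word T) k S c" "card S = greene k (reading_word T)"
    by (rule greene_attained)
  define N where "N = length (reading_word T)"
  have S_less: "S \<subseteq> {..<N}" using S(1) by (simp add: incr_colouring_def N_def)
  have rows_short: "\<forall>r\<in>set T. length r \<le> N"
    by (auto simp: N_def reading_word_def length_concat intro: member_le_sum_list)
  have col_less: "reading_col T q < N" if "q \<in> S" for q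
  proof -
    have "q < length (reading_word T)" using that S_less by (auto simp: N_def)
    then have "reading_col T q < length (T ! reading_row T q)" "reading_row T q < length T"
      using reading_word_nth_cell[of q T] by auto
    then show ?thesis using rows_short by (meson nth_mem order.strict_trans2)
  qed
  have column_bound: "card {q\<in>S. reading_col T q = j} \<le> min k (column_length T j)" for j
  proof -
    have "inj_on c {q\<in>S. reading_col T q = j}"
    proof (rule inj_onI, rule ccontr)
      fix a b assume ab: "a \<in> {q\<in>S. reading_col T q = j}" "b \<in> {q\<in>S. reading_col T q = j}"
        "c a = c b" "a \<noteq> b"
      have opposite: "reading_word T ! a < reading_word T ! b \<and> reading_word T ! b < reading_word T ! a"
        if "a \<in> S" "b \<in> S" "a < b" "c a = c b" "reading_col T a = reading_col T b" for a b
        using incr_colouringD[OF S(1) that(1-4)] reading_word_column_decreasing[OF T that(3)]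
          that S_less by (auto simp: N_def)
      show False
        using ab opposite[of a b] opposite[of b a] by (cases "a < b") auto
    qed
    moreover have "c ` {q\<in>S. reading_col T q = j} \<subseteq> {..<k}"
      using S(1) by (auto simp: incr_colouring_def)
    ultimately have "card {q\<in>S. reading_col T q = j} \<le> k"
      using card_inj_on_le[of c _ "{..<k}"] by auto
    moreover have "card {q\<in>S. reading_col T q = j}
        \<le> card {q. q < length (reading_word T) \<and> reading_col T q = j}"
      using S_less by (intro card_mono) (auto simp: N_def)
    ultimately show ?thesis by (simp add: card_reading_col)
  qed
  have "finite S" using S_less finite_subset by blast
  moreover have "reading_col T ` S \<subseteq> {..<N}" using col_less by auto
  ultimately have "card S = (\<Sum>j<N. card {q\<in>S. reading_col T q = j})"
    using card_eq_sum sum.group[of S "{..<N}" "reading_col T" "\<lambda>_. 1 :: nat"] by auto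
  also have "\<dots> \<le> (\<Sum>j<N. min k (column_length T j))" by (intro sum_mono column_bound)
  also have "\<dots> = row_sum k T" by (rule sum_min_column_length[OF T rows_short])
  finally show ?thesis using S(2) by simp
qed

lemma greene_reading_word: "is_tableau T \<Longrightarrow> greene k (reading_word T) = row_sum k T"
  using greene_le_row_sum row_sum_le_greene[OF is_tableau_rows_sorted] le_antisym by blast

section \<open>Conjugate shapes\<close>

definition col_sum :: "nat \<Rightarrow> int list list \<Rightarrow> nat" where
  "col_sum c T = sum_list (map (\<lambda>r. min c (length r)) T)"

lemma sum_list_map_take_drop:
  "sum_list (map f xs) = sum_list (map f (take m xs)) + sum_list (map f (drop m xs))"
  by (metis append_take_drop_id map_append sum_list_append)

lemma col_sum_take_drop:
  "col_sum c T = sum_list (map (\<lambda>r. min c (length r)) (take m T))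
                 + sum_list (map (\<lambda>r. min c (length r)) (drop m T))"
  and length_concat_take_drop:
  "length (concat T) = row_sum m T + sum_list (map length (drop m T))"
  by (simp_all add: col_sum_def row_sum_def length_concat flip: sum_list_map_take_drop)

lemma col_sum_add_row_sum_le: "col_sum c T + row_sum m T \<le> m * c + length (concat T)"
proof -
  have "sum_list (map (\<lambda>r. min c (length r)) (take m T)) \<le> sum_list (map (\<lambda>_. c) (take m T))"
    by (rule sum_list_mono) simp
  also have "\<dots> \<le> m * c" by (simp add: sum_list_triv)
  finally have "sum_list (map (\<lambda>r. min c (length r)) (take m T)) \<le> m * c" .
  moreover have "sum_list (map (\<lambda>r. min c (length r)) (drop m T)) \<le> sum_list (map length (drop m T))"
    by (rule sum_list_mono) simp
  ultimately show ?thesis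
    using col_sum_take_drop[of c T m] length_concat_take_drop[of T m] by linarith
qed

text \<open>Equality holds for \<open>m\<close> the number of rows of length at least \<open>c\<close>.\<close>

lemma col_sum_add_row_sum_eq:
  assumes "sorted_wrt (\<ge>) (map length T)"
  obtains m where "col_sum c T + row_sum m T = m * c + length (concat T)"
proof
  define P where "P = (\<lambda>r :: int list. c \<le> length r)"
  define m where "m = length (takeWhile P T)"
  have take: "take m T = takeWhile P T" and drop: "drop m T = dropWhile P T"
    by (simp_all add: m_def flip: takeWhile_eq_take dropWhile_eq_drop)
  have short: "\<forall>r\<in>set (dropWhile P T). length r < c"
  proof (cases "dropWhile P T")
    case (Cons r0 rest)
    have "\<not> P r0" using Cons by (metis dropWhile_eq_Cons_conv)
    moreover have "sorted_wrt (\<ge>) (map length (r0 # rest))"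
      using assms takeWhile_dropWhile_id[of P T] Cons
      by (metis map_append sorted_wrt_append)
    ultimately show ?thesis using Cons by (auto simp: P_def)
  qed (simp del: dropWhile_eq_Nil_conv)
  have "sum_list (map (\<lambda>r. min c (length r)) (takeWhile P T)) = m * c"
    using set_takeWhileD[of _ P T] by (simp add: P_def m_def sum_list_triv cong: map_cong)
  moreover have "sum_list (map (\<lambda>r. min c (length r)) (dropWhile P T)) = sum_list (map length (dropWhile P T))"
    using short by (simp cong: map_cong)
  ultimately show "col_sum c T + row_sum m T = m * c + length (concat T)"
    using col_sum_take_drop[of c T m] length_concat_take_drop[of T m] take drop by simp
qed

lemma col_sum_le_of_row_sum_le:
  assumes "sorted_wrt (\<ge>) (map length T)" and "length (concat T') = length (concat T)"
    and "\<And>m. row_sum m T \<le> row_sum m T' + d"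
  shows "col_sum c T' \<le> col_sum c T + d"
proof -
  obtain m where "col_sum c T + row_sum m T = m * c + length (concat T)"
    using col_sum_add_row_sum_eq[OF assms(1)] .
  moreover have "col_sum c T' + row_sum m T' \<le> m * c + length (concat T')"
    by (rule col_sum_add_row_sum_le)
  ultimately show ?thesis using assms(2) assms(3)[of m] by linarith
qed

lemma row_sum_Suc: "row_sum (Suc k) T = row_sum k T + (if k < length T then length (T!k) else 0)"
  by (simp add: row_sum_def take_Suc_conv_app_nth)

lemma sum_p_shape: "(\<Sum>i=1..k. p_shape y i) = row_sum k (rs_tableau y)"
  by (induction k) (simp_all add: row_sum_Suc p_shape_def Let_def)

lemma q_shape_eq_count:
  assumes "1 \<le> j"
  shows "q_shape y j = (\<Sum>i<length (rs_tableau y). if j \<le> length (rs_tableau y ! i) then 1 else 0)"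
proof -
  define T where "T = rs_tableau y"
  have "{i. 1 \<le> i \<and> j \<le> p_shape y i} = Suc ` {i. i < length T \<and> j \<le> length (T!i)}"
  proof (rule set_eqI, rule iffI)
    fix i assume "i \<in> {i. 1 \<le> i \<and> j \<le> p_shape y i}"
    then have "1 \<le> i" "i \<le> length T" "j \<le> length (T!(i - 1))"
      using assms by (auto simp: p_shape_def Let_def T_def split: if_splits)
    then show "i \<in> Suc ` {i. i < length T \<and> j \<le> length (T!i)}"
      by (intro image_eqI[of _ _ "i - 1"]) auto
  qed (auto simp: p_shape_def Let_def T_def)
  then have "q_shape y j = card {i. i < length T \<and> j \<le> length (T!i)}"
    using assms by (simp add: q_shape_def card_image)
  also have "\<dots> = (\<Sum>i<length T. if j \<le> length (T!i) then 1 else 0)"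
    by (simp add: sum.If_cases Collect_conj_eq lessThan_def Int_commute)
  finally show ?thesis by (simp add: T_def)
qed

lemma sum_q_shape: "(\<Sum>j=1..c. q_shape y j) = col_sum c (rs_tableau y)"
proof -
  define T where "T = rs_tableau y"
  have "(\<Sum>j=1..c. q_shape y j) = (\<Sum>j=1..c. \<Sum>i<length T. if j \<le> length (T!i) then 1 else 0)"
    by (rule sum.cong) (simp_all add: q_shape_eq_count T_def)
  also have "\<dots> = (\<Sum>i<length T. \<Sum>j=1..c. if j \<le> length (T!i) then 1 else 0)"
    by (rule sum.swap)
  also have "\<dots> = (\<Sum>i<length T. min c (length (T!i)))"
  proof (rule sum.cong[OF refl])
    fix i
    have "{1..c} \<inter> {j. j \<le> length (T!i)} = {1..min c (length (T!i))}" by auto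
    then show "(\<Sum>j=1..c. if j \<le> length (T!i) then 1 else 0) = min c (length (T!i))"
      by (simp add: sum.If_cases)
  qed
  also have "\<dots> = col_sum c T"
    by (simp add: col_sum_def sum_list_sum_nth atLeast0LessThan)
  finally show ?thesis by (simp add: T_def)
qed

section \<open>Exchanging two adjacent values\<close>

lemma transpose_less_iff:
  fixes a b u v :: int
  assumes "a < b" "u \<le> a \<or> b \<le> u" "v \<le> a \<or> b \<le> v" "{u, v} \<noteq> {a, b}"
  shows "Transposition.transpose a b u < Transposition.transpose a b v \<longleftrightarrow> u < v"
  using assms by (auto simp: transpose_def doubleton_eq_iff)

context
  fixes w :: "int list" and a b :: int and p q :: nat
  assumes w_distinct: "distinct w" and "a < b" and gap: "\<forall>e\<in>set w. e \<le> a \<or> b \<le> e"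
    and pq: "p < q" "q < length w" "w!p = a" "w!q = b"
begin

lemma positions_of_a_b:
  assumes "i < length w" "j < length w" "{w!i, w!j} = {a, b}"
  shows "{i, j} = {p, q}"
  using assms pq nth_eq_iff_index_eq[OF w_distinct] by (auto simp: doubleton_eq_iff)

lemma transpose_nth_less_iff:
  assumes "i < length w" "j < length w" "{i, j} \<noteq> {p, q}"
  shows "Transposition.transpose a b (w!i) < Transposition.transpose a b (w!j) \<longleftrightarrow> w!i < w!j"
  using assms positions_of_a_b \<open>a < b\<close> gap by (intro transpose_less_iff) auto

lemma greene_transpose_values_le: "greene k (map (Transposition.transpose a b) w) \<le> greene k w"
proof -
  obtain S c where S: "incr_colouring (map (Transposition.transpose a b) w) k S c"
      "card S = greene k (map (Transposition.transpose a b) w)"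
    by (rule greene_attained)
  have "incr_colouring w k S c"
    unfolding incr_colouring_def
  proof (intro conjI ballI impI)
    show "S \<subseteq> {..<length w}" "\<And>i. i \<in> S \<Longrightarrow> c i < k" using S(1) by (auto simp: incr_colouring_def)
    fix i j assume ij: "i \<in> S" "j \<in> S" "i < j \<and> c i = c j"
    then have ij_less: "i < length w" "j < length w" using S(1) by (auto simp: incr_colouring_def)
    have less: "Transposition.transpose a b (w!i) < Transposition.transpose a b (w!j)"
      using incr_colouringD[OF S(1), of i j] ij ij_less by auto
    show "w!i < w!j"
    proof (cases "{i, j} = {p, q}")
      case True
      then show ?thesis using ij pq \<open>a < b\<close> by (auto simp: doubleton_eq_iff)
    next
      case False
      then show ?thesis using less transpose_nth_less_iff ij_less by blast
    qed
  qed
  then show ?thesis using S(2) card_le_greene by fastforce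
qed

lemma greene_le_transpose_values: "greene k w \<le> greene k (map (Transposition.transpose a b) w) + 1"
proof -
  obtain S c where S: "incr_colouring w k S c" "card S = greene k w" by (rule greene_attained)
  have "incr_colouring (map (Transposition.transpose a b) w) k (S - {q}) c"
    unfolding incr_colouring_def
  proof (intro conjI ballI impI)
    show "S - {q} \<subseteq> {..<length (map (Transposition.transpose a b) w)}" "\<And>i. i \<in> S - {q} \<Longrightarrow> c i < k"
      using S(1) by (auto simp: incr_colouring_def)
    fix i j assume ij: "i \<in> S - {q}" "j \<in> S - {q}" "i < j \<and> c i = c j"
    then have ij_less: "i < length w" "j < length w" using S(1) by (auto simp: incr_colouring_def)
    have "w!i < w!j" using incr_colouringD[OF S(1)] ij by auto
    moreover have "{i, j} \<noteq> {p, q}" using ij by (auto simp: doubleton_eq_iff)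
    ultimately show "map (Transposition.transpose a b) w ! i < map (Transposition.transpose a b) w ! j"
      using transpose_nth_less_iff ij_less by simp
  qed
  then have "card (S - {q}) \<le> greene k (map (Transposition.transpose a b) w)" by (rule card_le_greene)
  moreover have "card S \<le> card (S - {q}) + 1" by (simp add: card_Diff_singleton_if; arith)
  ultimately show ?thesis using S(2) by simp
qed

end

section \<open>The doubled sequence\<close>

lemma row_sum_rs_tableau: "distinct w \<Longrightarrow> row_sum k (rs_tableau w) = greene k w"
  using rs_tableau_invariant greene_reading_word greene_knuth_equiv by metis

lemma length_concat_rs_tableau: "distinct w \<Longrightarrow> length (concat (rs_tableau w)) = length w"
  using rs_tableau_invariant knuth_equiv_set_length(2) by (fastforce simp: reading_word_def)

lemma rs_tableau_row_lengths: "distinct w \<Longrightarrow> sorted_wrt (\<ge>) (map length (rs_tableau w))"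
  using rs_tableau_invariant is_tableau_row_lengths by blast

lemma a_sum_eq_row_sum: "a_sum k y = row_sum k (rs_tableau (neg_double y))"
  by (simp only: a_sum_def sum_p_shape)

lemma b_sum_eq_col_sum: "b_sum k y = col_sum k (rs_tableau (neg_double y))"
  by (simp only: b_sum_def sum_q_shape)

lemma distinct_neg_double:
  assumes "0 \<notin> set x" "distinct (map abs x)"
  shows "distinct (neg_double x)"
proof -
  have "inj_on abs (set x)" "distinct x" using assms(2) by (simp_all add: distinct_map)
  moreover have "- e \<notin> set x" if "e \<in> set x" for e
    using that assms(1) inj_onD[OF \<open>inj_on abs (set x)\<close>, of e "- e"] by force
  ultimately show ?thesis by (auto simp: neg_double_def distinct_map inj_on_def)
qed

lemma neg_double_gap:
  assumes "0 \<notin> set x"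
  shows "\<forall>e\<in>set (neg_double x). e \<le> -1 \<or> 1 \<le> e"
proof
  fix e assume "e \<in> set (neg_double x)"
  then have "e \<noteq> 0" using assms by (auto simp: neg_double_def)
  then show "e \<le> -1 \<or> 1 \<le> e" by linarith
qed

lemma neg_double_positions:
  assumes "1 \<in> set x"
  obtains p q where "p < q" "q < length (neg_double x)" "neg_double x ! p = -1" "neg_double x ! q = 1"
proof -
  obtain i where i: "i < length x" "x!i = 1" using assms by (auto simp: in_set_conv_nth)
  show ?thesis
  proof
    show "length x - Suc i < length x + i" "length x + i < length (neg_double x)"
      using i by (auto simp: neg_double_def)
    have "length x - Suc i < length x" using i by simp
    then show "neg_double x ! (length x - Suc i) = -1"
      using i by (simp add: neg_double_def nth_append rev_nth Suc_diff_Suc)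
    show "neg_double x ! (length x + i) = 1"
      using i by (simp add: neg_double_def nth_append)
  qed
qed

lemma neg_double_flip_one:
  assumes "distinct (map abs x)" "1 \<in> set x"
  shows "neg_double (flip_one x) = map (Transposition.transpose (-1) 1) (neg_double x)"
proof -
  have "-1 \<notin> set x"
    using assms inj_onD[of abs "set x" "-1" 1] by (auto simp: distinct_map)
  then show ?thesis
    by (auto simp: neg_double_def flip_one_def transpose_def rev_map)
qed

lemma abs_flip_one: "map abs (flip_one x) = map abs x"
  by (induction x) (auto simp: flip_one_def)

lemma distinct_neg_double_flip_one:
  "0 \<notin> set x \<Longrightarrow> distinct (map abs x) \<Longrightarrow> distinct (neg_double (flip_one x))"
  by (rule distinct_neg_double) (simp_all add: abs_flip_one, auto simp: flip_one_def)

lemma greene_neg_double_flip_one: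
  assumes "0 \<notin> set x" "distinct (map abs x)" "1 \<in> set x"
  shows "greene k (neg_double (flip_one x)) \<le> greene k (neg_double x)"
    and "greene k (neg_double x) \<le> greene k (neg_double (flip_one x)) + 1"
proof -
  obtain p q where pq: "p < q" "q < length (neg_double x)"
      "neg_double x ! p = -1" "neg_double x ! q = 1"
    using neg_double_positions[OF assms(3)] by blast
  note transpose_bounds = greene_transpose_values_le greene_le_transpose_values
  show "greene k (neg_double (flip_one x)) \<le> greene k (neg_double x)"
       "greene k (neg_double x) \<le> greene k (neg_double (flip_one x)) + 1"
    using transpose_bounds[OF distinct_neg_double[OF assms(1,2)] _ neg_double_gap[OF assms(1)] pq]
    by (simp_all add: neg_double_flip_one[OF assms(2,3)])
qed

theorem mainTheorem5:
  fixes x :: "int list" and k :: nat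
  assumes "0 \<notin> set x"
    and "distinct (map abs x)"
    and "1 \<in> set x"
    and "k \<ge> 1"
  shows "int (a_sum k x) - int (a_sum k (flip_one x)) \<in> {0, 1}
       \<and> int (b_sum k x) - int (b_sum k (flip_one x)) \<in> {0, -1}"
proof -
  define T where "T = rs_tableau (neg_double x)"
  define T' where "T' = rs_tableau (neg_double (flip_one x))"
  note distinct_words = distinct_neg_double[OF assms(1,2)] distinct_neg_double_flip_one[OF assms(1,2)]
  have rows: "row_sum m T' \<le> row_sum m T" "row_sum m T \<le> row_sum m T' + 1" for m
    using greene_neg_double_flip_one[OF assms(1-3)] row_sum_rs_tableau distinct_words
    by (simp_all add: T_def T'_def)
  have "length (concat T') = length (concat T)"
    using length_concat_rs_tableau distinct_words by (simp add: T_def T'_def neg_double_def flip_one_def)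
  then have cols: "col_sum k T \<le> col_sum k T'" "col_sum k T' \<le> col_sum k T + 1"
    using col_sum_le_of_row_sum_le[of T' T 0] col_sum_le_of_row_sum_le[of T T' 1]
      rows rs_tableau_row_lengths distinct_words
    by (simp_all add: T_def T'_def)
  show ?thesis
    using rows[of k] cols by (auto simp: a_sum_eq_row_sum b_sum_eq_col_sum T_def T'_def)
qed

end
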